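(* Let $X$ and $a$ be variables, let $C_k=\frac1{k+1}\binom{2k}{k}$ denote the Catalan numbers, and let $U_n(x)$ be the Chebyshev polynomials of the second kind, defined by $\sum_{n\ge0}U_n(x)z^n=\frac1{1-2xz+z^2}$, with $U_{-1}(x)=0$. Then for all positive integers $n$, $$\det_{0\le i,j\le n-1}\left(X(-2a)^{i+j}+\sum_{k=0}^{\lfloor(i+j-1)/2\rfloor}(-2a)^{i+j-2k-1}C_k\right)=(-1)^{n-1}\big(XU_{n-1}(-a)+U_{n-2}(-a)\big).$$
   Context: An empty sum (when $\lfloor(i+j-1)/2\rfloor<0$) equals $0$. *)

theory Defs
  imports "Jordan_Normal_Form.Determinant" "HOL-Computational_Algebra.Formal_Power_Series"
begin

text \<open>Catalan numbers C_k = binom(2k,k)/(k+1) (the division is exact).\<close>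
definition catalan :: "nat \<Rightarrow> nat" where
  "catalan k = ((2*k) choose k) div (k+1)"

definition chebU :: "'a::field \<Rightarrow> int \<Rightarrow> 'a" where
  "chebU x n = (if n < 0 then 0 else
     fps_nth (inverse (1 - fps_const (2*x) * fps_X + fps_X^2)) (nat n))"

end

(*
  Write b = -2a. The Hankel entries m_N = X b^N + sum_k b^(N-2k-1) C_k satisfy
  m_(N+1) = b m_N + mu_N, where mu_N is the number of Dyck paths of length N. Congruence by
  the unit lower bidiagonal matrix with -b below the diagonal therefore turns the Hankel
  matrix into one built from X and the mu_N alone. The mu_N are the moments of the
  tridiagonal matrix J with zero diagonal and unit off-diagonals: for the matrix L of ballot
  numbers, L L^T and L J L^T are the Hankel matrices of mu_N and mu_(N+1). So the reduced
  matrix is also a congruence transform, by a unit lower triangular matrix, of the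
  tridiagonal matrix with diagonal X, -b, -b, ... and unit off-diagonals, whose
  determinants satisfy the three-term recurrence of U_n(-a).
*)
theory Submission
  imports Defs
begin

lemma fps_nth_inverse_chebyshev:
  fixes x :: "'a::field"
  defines "F \<equiv> inverse (1 - fps_const (2*x) * fps_X + fps_X^2)"
  shows "fps_nth F 0 = 1" and "fps_nth F (Suc 0) = 2*x"
    and "fps_nth F (Suc (Suc n)) = 2*x * fps_nth F (Suc n) - fps_nth F n"
proof -
  let ?D = "1 - fps_const (2*x) * fps_X + fps_X^2 :: 'a fps"
  have inverse: "F * ?D = 1"
    unfolding F_def by (rule inverse_mult_eq_1) simp
  have expand: "F * ?D = F - fps_const (2*x) * (fps_X * F) + fps_X^2 * F"
    by (simp add: algebra_simps)
  have coeff: "fps_nth F k - 2*x * (if k = 0 then 0 else fps_nth F (k-1))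
      + (if k < 2 then 0 else fps_nth F (k-2)) = fps_nth (F * ?D) k" for k
    unfolding expand by (simp add: fps_X_mult_nth fps_X_power_mult_nth)
  from coeff[of 0] inverse show "fps_nth F 0 = 1" by simp
  with coeff[of 1] inverse show "fps_nth F (Suc 0) = 2*x" by simp
  from coeff[of "Suc (Suc n)"] inverse
  have "fps_nth F (Suc (Suc n)) - 2*x * fps_nth F (Suc n) + fps_nth F n = 0"
    by simp
  then show "fps_nth F (Suc (Suc n)) = 2*x * fps_nth F (Suc n) - fps_nth F n"
    by (simp add: algebra_simps add_eq_0_iff2 eq_diff_eq)
qed

lemma chebU_0: "chebU x 0 = 1"
  by (simp add: chebU_def fps_nth_inverse_chebyshev)

lemma chebU_rec:
  assumes "m \<ge> 0"
  shows "chebU x (m + 1) = 2*x * chebU x m - chebU x (m - 1)"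
proof -
  obtain k where k: "m = int k" using assms by (metis nonneg_eq_int)
  show ?thesis
  proof (cases k)
    case 0
    then show ?thesis using k by (simp add: chebU_def fps_nth_inverse_chebyshev)
  next
    case (Suc j)
    have "nat (m + 1) = Suc (Suc j)" "nat m = Suc j" "nat (m - 1) = j" using k Suc by auto
    then show ?thesis using assms unfolding chebU_def by (simp add: fps_nth_inverse_chebyshev)
  qed
qed

text \<open>\<open>ballot i k\<close> counts the paths of \<open>i\<close> up and down steps from height 0 to height \<open>k\<close>
  that never go below 0; \<open>ballot (2*p) 0\<close> counts Dyck paths.\<close>
fun ballot :: "nat \<Rightarrow> nat \<Rightarrow> nat" where
  "ballot 0 k = (if k = 0 then 1 else 0)"
| "ballot (Suc i) k = (case k of 0 \<Rightarrow> 0 | Suc k' \<Rightarrow> ballot i k') + ballot i (Suc k)"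

lemma ballot_eq_0_if_less: "i < k \<Longrightarrow> ballot i k = 0"
  by (induction i arbitrary: k) (auto split: nat.splits)

lemma ballot_diag [simp]: "ballot i i = 1"
  by (induction i) (auto simp: ballot_eq_0_if_less)

lemma ballot_eq_0_if_odd: "odd (i + k) \<Longrightarrow> ballot i k = 0"
  by (induction i arbitrary: k) (auto split: nat.splits elim: oddE)

lemma ballot_reflection:
  assumes "k \<le> i" "even (i + k)"
  shows "int (ballot i k) = int (i choose ((i + k) div 2)) - int (i choose Suc ((i + k) div 2))"
  using assms
proof (induction i arbitrary: k)
  case 0
  then show ?case by simp
next
  case (Suc i k)
  show ?case
  proof (cases k)
    case 0
    then obtain q where q: "i = 2*q + 1" using Suc.prems by (metis even_Suc add_0_right oddE)
    have "int (ballot (Suc i) k) = int (i choose Suc q) - int (i choose Suc (Suc q))"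
      using Suc.IH[of 1] q 0 by simp
    also have "i choose Suc q = i choose q"
      using binomial_symmetric[of "Suc q" i] q by simp
    finally show ?thesis using q 0 by simp
  next
    case (Suc k')
    show ?thesis
    proof (cases "k' = i")
      case True
      then show ?thesis using Suc by (simp add: ballot_eq_0_if_less)
    next
      case False
      with Suc.prems Suc have k': "Suc (Suc k') \<le> i" "even (i + k')" by presburger+
      define t where "t = (i + k') div 2"
      have "(i + Suc (Suc k')) div 2 = Suc t" "(Suc i + k) div 2 = Suc t"
        using k' Suc unfolding t_def by presburger+
      moreover have "int (ballot (Suc i) k) = int (ballot i k') + int (ballot i (Suc (Suc k')))"
        using Suc by simp
      ultimately show ?thesis
        using Suc.IH[of k'] Suc.IH[of "Suc (Suc k')"] k' unfolding t_def by simp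
    qed
  qed
qed

lemma catalan_eq_ballot: "catalan p = ballot (2*p) 0"
proof -
  have pascal: "Suc p * (2*p choose Suc p) = p * (2*p choose p)"
  proof (cases p)
    case (Suc r)
    then show ?thesis using Suc_times_binomial_add[of p r] by (simp add: mult_2)
  qed simp
  have "int (ballot (2*p) 0) = int (2*p choose p) - int (2*p choose Suc p)"
    using ballot_reflection[of 0 "2*p"] by simp
  then have "ballot (2*p) 0 = (2*p choose p) - (2*p choose Suc p)"
    by linarith
  then have "2*p choose p = (p + 1) * ballot (2*p) 0"
    using pascal by (simp add: diff_mult_distrib2)
  then show ?thesis
    unfolding catalan_def by (metis add_eq_0_iff_both_eq_0 nonzero_mult_div_cancel_left one_neq_zero)
qed

lemma of_nat_ballot_0: "of_nat (ballot N 0) = (if even N then of_nat (catalan (N div 2)) else 0)"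
  by (auto simp: catalan_eq_ballot ballot_eq_0_if_odd)

lemma sum_case_nat_shift:
  fixes f g :: "nat \<Rightarrow> 'a::comm_semiring_0"
  assumes "f M = 0"
  shows "(\<Sum>k\<le>M. (case k of 0 \<Rightarrow> 0 | Suc k' \<Rightarrow> f k') * g k) = (\<Sum>k\<le>M. f k * g (Suc k))"
proof (cases M)
  case 0
  then show ?thesis using assms by simp
next
  case (Suc M')
  have "(\<Sum>k\<le>M. (case k of 0 \<Rightarrow> 0 | Suc k' \<Rightarrow> f k') * g k) = (\<Sum>k\<le>M'. f k * g (Suc k))"
    unfolding Suc by (simp add: sum.atMost_Suc_shift del: sum.atMost_Suc)
  also have "\<dots> = (\<Sum>k\<le>M. f k * g (Suc k))"
    using assms Suc by simp
  finally show ?thesis .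
qed

text \<open>A step can be moved from one path to the other: the one-step transition matrix of
  the walk on \<open>\<nat>\<close> is symmetric.\<close>
lemma sum_ballot_Suc_mult:
  "(\<Sum>k\<le>Suc (i + j). ballot (Suc i) k * ballot j k) = (\<Sum>k\<le>Suc (i + j). ballot i k * ballot (Suc j) k)"
proof -
  let ?M = "Suc (i + j)"
  have "(\<Sum>k\<le>?M. ballot (Suc i) k * ballot j k)
      = (\<Sum>k\<le>?M. (case k of 0 \<Rightarrow> 0 | Suc k' \<Rightarrow> ballot i k') * ballot j k) + (\<Sum>k\<le>?M. ballot i (Suc k) * ballot j k)"
    by (simp add: sum.distrib algebra_simps del: sum.atMost_Suc)
  also have "(\<Sum>k\<le>?M. (case k of 0 \<Rightarrow> 0 | Suc k' \<Rightarrow> ballot i k') * ballot j k)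
      = (\<Sum>k\<le>?M. ballot i k * ballot j (Suc k))"
    by (rule sum_case_nat_shift) (simp add: ballot_eq_0_if_less)
  also have "(\<Sum>k\<le>?M. ballot i (Suc k) * ballot j k)
      = (\<Sum>k\<le>?M. (case k of 0 \<Rightarrow> 0 | Suc k' \<Rightarrow> ballot j k') * ballot i k)"
    by (subst sum_case_nat_shift) (simp_all add: ballot_eq_0_if_less mult.commute)
  also have "(\<Sum>k\<le>?M. ballot i k * ballot j (Suc k)) + (\<Sum>k\<le>?M. (case k of 0 \<Rightarrow> 0 | Suc k' \<Rightarrow> ballot j k') * ballot i k)
      = (\<Sum>k\<le>?M. ballot i k * ballot (Suc j) k)"
    by (simp add: sum.distrib algebra_simps del: sum.atMost_Suc)
  finally show ?thesis .
qed

lemma sum_ballot_mult: "(\<Sum>k\<le>i + j. ballot i k * ballot j k) = ballot (i + j) 0"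
proof (induction i arbitrary: j)
  case 0
  then show ?case by (simp add: sum.atMost_shift del: sum.atMost_Suc)
next
  case (Suc i)
  then show ?case
    using sum_ballot_Suc_mult[of i j] Suc.IH[of "Suc j"] by (simp del: ballot.simps sum.atMost_Suc)
qed

lemma sum_of_nat_ballot_mult:
  assumes "j < N"
  shows "(\<Sum>k<N. of_nat (ballot i k) * of_nat (ballot j k)) = (of_nat (ballot (i + j) 0) :: 'a::comm_semiring_1)"
proof -
  have "(\<Sum>k<N. of_nat (ballot i k) * of_nat (ballot j k)) = (\<Sum>k\<le>j. of_nat (ballot i k) * (of_nat (ballot j k) :: 'a))"
    by (rule sum.mono_neutral_right) (use assms in \<open>auto simp: ballot_eq_0_if_less\<close>)
  also have "\<dots> = (\<Sum>k\<le>i + j. of_nat (ballot i k) * of_nat (ballot j k))"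
    by (rule sum.mono_neutral_left) (auto simp: ballot_eq_0_if_less)
  also have "\<dots> = of_nat (ballot (i + j) 0)"
    by (simp flip: sum_ballot_mult)
  finally show ?thesis .
qed

lemma sum_ballot_step_mult:
  assumes "j < N"
  shows "(\<Sum>l<N. (of_nat (ballot (Suc i) l) - b * of_nat (ballot i l)) * of_nat (ballot j l))
    = of_nat (ballot (Suc i + j) 0) - b * (of_nat (ballot (i + j) 0) :: 'a::comm_ring_1)"
proof -
  have "(\<Sum>l<N. (of_nat (ballot (Suc i) l) - b * of_nat (ballot i l)) * of_nat (ballot j l))
      = (\<Sum>l<N. of_nat (ballot (Suc i) l) * of_nat (ballot j l))
        - b * (\<Sum>l<N. of_nat (ballot i l) * (of_nat (ballot j l) :: 'a))"
    by (simp add: left_diff_distrib sum_subtractf sum_distrib_left mult.assoc del: ballot.simps)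
  with assms show ?thesis
    by (simp only: sum_of_nat_ballot_mult)
qed

definition catalan_part :: "'a::comm_semiring_1 \<Rightarrow> nat \<Rightarrow> 'a" where
  "catalan_part b N = (\<Sum>k<(N + 1) div 2. b^(N - 2*k - 1) * of_nat (catalan k))"

lemma catalan_part_Suc: "catalan_part b (Suc N) = b * catalan_part b N + of_nat (ballot N 0)"
proof -
  have shift: "b^(Suc N - 2*k - 1) = b * b^(N - 2*k - 1)" if "k < (N + 1) div 2" for k
  proof -
    from that have "Suc N - 2*k - 1 = Suc (N - 2*k - 1)" by presburger
    then show ?thesis by simp
  qed
  show ?thesis
  proof (cases "even N")
    case True
    then have "(Suc N + 1) div 2 = Suc ((N + 1) div 2)" "(N + 1) div 2 = N div 2" by presburger+
    then show ?thesis
      using True shift unfolding catalan_part_def of_nat_ballot_0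
      by (simp add: sum_distrib_left mult.assoc)
  next
    case False
    then have "(Suc N + 1) div 2 = (N + 1) div 2" by presburger
    then show ?thesis
      using False shift unfolding catalan_part_def of_nat_ballot_0
      by (simp add: sum_distrib_left mult.assoc del: sum.lessThan_Suc)
  qed
qed

lemma sum_int_range_eq_catalan_part:
  "(\<Sum>k=0..(int N - 1) div 2. b^(nat (int N - 2*k - 1)) * of_nat (catalan (nat k))) = catalan_part b N"
  unfolding catalan_part_def
proof (rule sum.reindex_bij_witness[of _ int nat])
  fix k assume k: "k \<in> {0..(int N - 1) div 2}"
  then obtain m where m: "k = int m" by (metis atLeastAtMost_iff nonneg_eq_int)
  then show "int (nat k) = k" by simp
  from k m show "nat k \<in> {..<(N + 1) div 2}" by auto
  have "nat (int N - 2*int m - 1) = N - 2*m - 1" by arith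
  then show "b^(N - 2 * nat k - 1) * of_nat (catalan (nat k)) = b^(nat (int N - 2*k - 1)) * of_nat (catalan (nat k))"
    using m by simp
next
  fix k assume "k \<in> {..<(N + 1) div 2}"
  then show "nat (int k) = k" "int k \<in> {0..(int N - 1) div 2}" by auto
qed

lemma mat_mult_mat_mult_transpose_mat:
  "mat n n f * mat n n g * transpose_mat (mat n n h)
     = mat n n (\<lambda>(i,j). \<Sum>l<n. (\<Sum>k<n. f (i,k) * g (k,l)) * h (j,l))"
  by (rule eq_matI) (auto simp: scalar_prod_def atLeast0LessThan intro!: sum.cong)

lemma det_congruence_unimodular:
  fixes A B C :: "'a::comm_ring_1 mat"
  assumes "A \<in> carrier_mat n n" "B \<in> carrier_mat n n" "C \<in> carrier_mat n n"
    and "det A = 1" "det C = 1"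
  shows "det (A * B * transpose_mat C) = det B"
  using assms by (simp add: det_mult det_transpose)

lemma det_unit_lower_triangular:
  fixes f :: "nat \<times> nat \<Rightarrow> 'a::comm_ring_1"
  assumes "\<And>i j. i < j \<Longrightarrow> f (i,j) = 0" and "\<And>i. f (i,i) = 1"
  shows "det (mat n n f) = 1"
proof -
  have "det (mat n n f) = prod_list (diag_mat (mat n n f))"
    by (rule det_lower_triangular[of n]) (use assms in auto)
  also have "diag_mat (mat n n f) = map (\<lambda>_. 1) [0..<n]"
    unfolding diag_mat_def using assms by (auto intro!: map_cong)
  finally show ?thesis by (simp add: map_replicate_const)
qed

lemma det_tridiagonal_Suc_Suc:
  fixes t :: "nat \<Rightarrow> nat \<Rightarrow> 'a::comm_ring_1"
  assumes above: "\<And>i j. Suc i < j \<Longrightarrow> t i j = 0" and below: "\<And>i j. Suc j < i \<Longrightarrow> t i j = 0"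
  shows "det (mat (Suc (Suc n)) (Suc (Suc n)) (\<lambda>(i,j). t i j))
    = t (Suc n) (Suc n) * det (mat (Suc n) (Suc n) (\<lambda>(i,j). t i j))
      - t n (Suc n) * t (Suc n) n * det (mat n n (\<lambda>(i,j). t i j))"
proof -
  define A where "A = mat (Suc (Suc n)) (Suc (Suc n)) (\<lambda>(i,j). t i j)"
  define B where "B = mat_delete A n (Suc n)"
  have A: "A \<in> carrier_mat (Suc (Suc n)) (Suc (Suc n))" unfolding A_def by simp
  have B: "B = mat (Suc n) (Suc n) (\<lambda>(i,j). t (if i < n then i else Suc i) j)"
    unfolding B_def mat_delete_def A_def by (rule eq_matI) auto
  have "det B = (\<Sum>j<Suc n. B $$ (n, j) * cofactor B n j)"
    by (rule laplace_expansion_row) (simp_all add: B)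
  also have "\<dots> = B $$ (n, n) * cofactor B n n"
    by (simp add: sum.neutral B below)
  also have "mat_delete B n n = mat n n (\<lambda>(i,j). t i j)"
    unfolding mat_delete_def B by (rule eq_matI) auto
  then have "B $$ (n, n) * cofactor B n n = t (Suc n) n * det (mat n n (\<lambda>(i,j). t i j))"
    by (simp add: B cofactor_def)
  finally have det_B: "det B = t (Suc n) n * det (mat n n (\<lambda>(i,j). t i j))" .
  have "mat_delete A (Suc n) (Suc n) = mat (Suc n) (Suc n) (\<lambda>(i,j). t i j)"
    unfolding mat_delete_def A_def by (rule eq_matI) auto
  moreover have "det A = (\<Sum>i<Suc (Suc n). A $$ (i, Suc n) * cofactor A i (Suc n))"
    by (rule laplace_expansion_column[OF A]) simp
  moreover have "(\<Sum>i<n. A $$ (i, Suc n) * cofactor A i (Suc n)) = 0"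
    by (rule sum.neutral) (auto simp: A_def above)
  ultimately show ?thesis
    using det_B unfolding A_def[symmetric] B_def by (simp add: A_def cofactor_def algebra_simps)
qed

definition bidiag_shift :: "'a::comm_ring_1 \<Rightarrow> nat \<Rightarrow> nat \<Rightarrow> 'a" where
  "bidiag_shift b i k = (if k = i then 1 else if Suc k = i then -b else 0)"

lemma sum_bidiag_shift_mult:
  assumes "i < n"
  shows "(\<Sum>k<n. bidiag_shift b i k * g k) = g i - (if i = 0 then 0 else b * g (i - 1))"
proof -
  have "(\<Sum>k<n. bidiag_shift b i k * g k)
      = (\<Sum>k<n. (if k = i then g i else 0) - (if Suc k = i then b * g k else 0))"
    by (rule sum.cong) (auto simp: bidiag_shift_def)
  also have "\<dots> = g i - (if i = 0 then 0 else b * g (i - 1))"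
    using assms by (cases i) (simp_all add: sum_subtractf)
  finally show ?thesis .
qed

definition reduced_hankel :: "'a \<Rightarrow> 'a \<Rightarrow> (nat \<Rightarrow> 'a) \<Rightarrow> nat \<Rightarrow> nat \<Rightarrow> 'a::comm_ring_1" where
  "reduced_hankel x b c i j =
     (if i = 0 \<and> j = 0 then x else if i = 0 then c (j - 1) else if j = 0 then c (i - 1)
      else c (i + j - 1) - b * c (i + j - 2))"

lemma hankel_congruence_bidiag_shift:
  fixes s c :: "nat \<Rightarrow> 'a::comm_ring_1"
  assumes rec: "\<And>N. s (Suc N) = b * s N + c N"
  shows "mat n n (\<lambda>(i,k). bidiag_shift b i k) * mat n n (\<lambda>(i,j). s (i + j))
           * transpose_mat (mat n n (\<lambda>(i,k). bidiag_shift b i k))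
         = mat n n (\<lambda>(i,j). reduced_hankel (s 0) b c i j)"
  unfolding mat_mult_mat_mult_transpose_mat
proof (rule eq_matI; clarsimp)
  fix i j assume i: "i < n" and j: "j < n"
  define h where "h l = (if i = 0 then s l else c (i - 1 + l))" for l
  have "(\<Sum>k<n. bidiag_shift b i k * s (k + l)) = h l" for l
    using sum_bidiag_shift_mult[OF i, of b "\<lambda>k. s (k + l)"] rec[of "i - 1 + l"]
    by (cases i) (simp_all add: h_def)
  then have "(\<Sum>l<n. (\<Sum>k<n. bidiag_shift b i k * s (k + l)) * bidiag_shift b j l)
      = (\<Sum>l<n. bidiag_shift b j l * h l)"
    by (simp add: mult.commute)
  also have "\<dots> = h j - (if j = 0 then 0 else b * h (j - 1))"
    by (rule sum_bidiag_shift_mult[OF j])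
  also have "\<dots> = reduced_hankel (s 0) b c i j"
    using rec[of "j - 1"] by (cases i; cases j) (simp_all add: h_def reduced_hankel_def)
  finally show "(\<Sum>l<n. (\<Sum>k<n. bidiag_shift b i k * s (k + l)) * bidiag_shift b j l)
      = reduced_hankel (s 0) b c i j" .
qed

definition jacobi :: "'a \<Rightarrow> 'a \<Rightarrow> nat \<Rightarrow> nat \<Rightarrow> 'a::comm_ring_1" where
  "jacobi x b k l =
     (if k = l then (if k = 0 then x else -b) else if l = Suc k \<or> k = Suc l then 1 else 0)"

lemma sum_mult_jacobi:
  assumes l: "l < n" and g: "\<And>k. n \<le> k \<Longrightarrow> g k = 0"
  shows "(\<Sum>k<n. g k * jacobi x b k l)
    = (if l = 0 then x * g 0 + g 1 else g (l - 1) - b * g l + g (Suc l))"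
proof -
  have "(\<Sum>k<n. g k * jacobi x b k l)
      = (\<Sum>k<n. (if k = l then g l * (if l = 0 then x else -b) else 0)
          + (if k = Suc l then g (Suc l) else 0) + (if l \<noteq> 0 \<and> k = l - 1 then g (l - 1) else 0))"
    by (rule sum.cong) (auto simp: jacobi_def)
  also have "\<dots> = g l * (if l = 0 then x else -b) + g (Suc l) + (if l \<noteq> 0 then g (l - 1) else 0)"
    using l g[of "Suc l"] by (simp add: sum.distrib) (auto intro: g)
  finally show ?thesis by (cases l) (auto simp: algebra_simps)
qed

definition ballot_bordered :: "nat \<Rightarrow> nat \<Rightarrow> 'a::comm_ring_1" where
  "ballot_bordered i k =
     (if i = 0 then (if k = 0 then 1 else 0) else if k = 0 then 0 else of_nat (ballot (i - 1) (k - 1)))"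

lemma ballot_bordered_eq_0_if_less: "i < k \<Longrightarrow> ballot_bordered i k = 0"
  by (auto simp: ballot_bordered_def ballot_eq_0_if_less)

lemma sum_ballot_bordered_mult_jacobi:
  assumes "i < n" "l < n"
  shows "(\<Sum>k<n. ballot_bordered i k * jacobi x b k l) =
    (if i = 0 then (if l = 0 then x else if l = 1 then 1 else 0)
     else case l of 0 \<Rightarrow> of_nat (ballot (i - 1) 0)
       | Suc l' \<Rightarrow> of_nat (ballot i l') - b * of_nat (ballot (i - 1) l'))"
proof -
  have "(\<Sum>k<n. ballot_bordered i k * jacobi x b k l) =
      (if l = 0 then x * ballot_bordered i 0 + ballot_bordered i 1
       else ballot_bordered i (l - 1) - b * ballot_bordered i l + ballot_bordered i (Suc l))"
    by (rule sum_mult_jacobi) (use assms in \<open>auto simp: ballot_bordered_eq_0_if_less\<close>)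
  then show ?thesis
    by (cases i; cases l) (auto simp: ballot_bordered_def split: nat.split)
qed

lemma sum_mult_ballot_bordered:
  "(\<Sum>l<Suc n. f l * ballot_bordered j l)
    = (if j = 0 then f 0 else \<Sum>l<n. f (Suc l) * of_nat (ballot (j - 1) l))"
  by (simp add: sum.lessThan_Suc_shift ballot_bordered_def del: sum.lessThan_Suc)

lemma jacobi_congruence_ballot_bordered:
  "mat n n (\<lambda>(i,k). ballot_bordered i k) * mat n n (\<lambda>(k,l). jacobi x b k l)
     * transpose_mat (mat n n (\<lambda>(i,k). ballot_bordered i k))
   = mat n n (\<lambda>(i,j). reduced_hankel x b (\<lambda>N. of_nat (ballot N 0)) i j)"
  unfolding mat_mult_mat_mult_transpose_mat
proof (rule eq_matI; clarsimp)
  fix i j assume i: "i < n" and j: "j < n"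
  then obtain n' where n': "n = Suc n'" by (cases n) auto
  define row where "row l = (\<Sum>k<n. ballot_bordered i k * jacobi x b k l)" for l
  have row_Suc: "row (Suc l) = (if i = 0 then (if l = 0 then 1 else 0)
      else of_nat (ballot i l) - b * of_nat (ballot (i - 1) l))" if "l < n'" for l
  proof -
    from that n' have "Suc l < n" by simp
    then show ?thesis
      using sum_ballot_bordered_mult_jacobi[OF i, where x = x and b = b] by (simp add: row_def)
  qed
  have row_0: "row 0 = (if i = 0 then x else of_nat (ballot (i - 1) 0))"
    using sum_ballot_bordered_mult_jacobi[OF i, where l = 0 and x = x and b = b] i by (simp add: row_def)
  have row_Suc_sum: "(\<Sum>l<n'. row (Suc l) * of_nat (ballot j' l))
      = (if i = 0 then of_nat (ballot j' 0)
         else of_nat (ballot (i + j') 0) - b * of_nat (ballot (i - 1 + j') 0))" if j': "j' < n'" for j'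
  proof (cases i)
    case 0
    have "(\<Sum>l<n'. row (Suc l) * of_nat (ballot j' l)) = (\<Sum>l<n'. if l = 0 then of_nat (ballot j' 0) else 0)"
      by (rule sum.cong) (simp_all add: row_Suc 0)
    then show ?thesis using 0 j' by simp
  next
    case (Suc i')
    have "(\<Sum>l<n'. row (Suc l) * of_nat (ballot j' l))
        = (\<Sum>l<n'. (of_nat (ballot (Suc i') l) - b * of_nat (ballot i' l)) * of_nat (ballot j' l))"
      by (rule sum.cong) (simp_all add: row_Suc Suc)
    then show ?thesis using Suc j' by (simp add: sum_ballot_step_mult del: ballot.simps)
  qed
  have "(\<Sum>l<n. row l * ballot_bordered j l) = reduced_hankel x b (\<lambda>N. of_nat (ballot N 0)) i j"
    unfolding n' sum_mult_ballot_bordered using row_0 row_Suc_sum j n'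
    by (cases j) (simp_all add: reduced_hankel_def del: ballot.simps)
  then show "(\<Sum>l<n. (\<Sum>k<n. ballot_bordered i k * jacobi x b k l) * ballot_bordered j l)
      = reduced_hankel x b (\<lambda>N. of_nat (ballot N 0)) i j"
    by (simp add: row_def)
qed

lemma det_jacobi_Suc_Suc:
  "det (mat (Suc (Suc n)) (Suc (Suc n)) (\<lambda>(k,l). jacobi x b k l))
    = - b * det (mat (Suc n) (Suc n) (\<lambda>(k,l). jacobi x b k l)) - det (mat n n (\<lambda>(k,l). jacobi x b k l))"
proof -
  have "det (mat (Suc (Suc n)) (Suc (Suc n)) (\<lambda>(k,l). jacobi x b k l))
    = jacobi x b (Suc n) (Suc n) * det (mat (Suc n) (Suc n) (\<lambda>(k,l). jacobi x b k l))
      - jacobi x b n (Suc n) * jacobi x b (Suc n) n * det (mat n n (\<lambda>(k,l). jacobi x b k l))"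
    by (rule det_tridiagonal_Suc_Suc) (auto simp: jacobi_def)
  then show ?thesis by (simp add: jacobi_def)
qed

lemma det_jacobi_chebU:
  fixes x a :: "'a::field"
  shows "det (mat (Suc n) (Suc n) (\<lambda>(k,l). jacobi x (-2*a) k l))
    = (-1)^n * (x * chebU (-a) (int n) + chebU (-a) (int n - 1))"
proof (induction n rule: induct_nat_012)
  case 0
  show ?case
    by (subst det_single) (auto simp: jacobi_def chebU_0 chebU_def)
next
  case 1
  show ?case
    using det_jacobi_Suc_Suc[of 0 x "-2*a"] det_single[of "mat 1 1 (\<lambda>(k,l). jacobi x (-2*a) k l)"]
      chebU_rec[of 0 "-a"]
    by (simp add: jacobi_def chebU_0 chebU_def)
next
  case (ge2 n)
  let ?U = "chebU (-a)" and ?D = "\<lambda>m. det (mat m m (\<lambda>(k,l). jacobi x (-2*a) k l))"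
  have int_Suc: "int (Suc n) = int n + 1" "int (Suc (Suc n)) = int n + 2" by simp_all
  have U1: "?U (int n + 1) = -2*a * ?U (int n) - ?U (int n - 1)"
    using chebU_rec[of "int n" "-a"] by simp
  have U2: "?U (int n + 2) = -2*a * ?U (int n + 1) - ?U (int n)"
    using chebU_rec[of "int n + 1" "-a"] by (simp add: add.assoc)
  have D2: "?D (Suc (Suc n)) = - ((-1)^n * (x * ?U (int n + 1) + ?U (int n)))"
    using ge2(2) unfolding int_Suc by simp
  have "?D (Suc (Suc (Suc n))) = 2*a * ?D (Suc (Suc n)) - ?D (Suc n)"
    using det_jacobi_Suc_Suc[of "Suc n" x "-2*a"] by simp
  also have "\<dots> = (-1)^n * (x * (-2*a * ?U (int n + 1) - ?U (int n)) + (-2*a * ?U (int n) - ?U (int n - 1)))"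
    unfolding D2 ge2(1) by (simp add: algebra_simps)
  also have "\<dots> = (-1)^(Suc (Suc n)) * (x * ?U (int (Suc (Suc n))) + ?U (int (Suc (Suc n)) - 1))"
    unfolding int_Suc U1 [symmetric] U2 [symmetric] by (simp add: ac_simps)
  finally show ?case .
qed

theorem theorem14:
  fixes X a :: "'a::field" and n :: nat
  assumes "n \<ge> 1"
  shows "det (mat n n (\<lambda>(i,j).
            X * (-2*a)^(i+j)
            + (\<Sum>k=0..(int (i+j) - 1) div 2.
                 (-2*a)^(nat (int (i+j) - 2*k - 1)) * of_nat (catalan (nat k)))))
         = (-1)^(n-1) * (X * chebU (-a) (int n - 1) + chebU (-a) (int n - 2))"
proof -
  let ?b = "-2*a"
  define s where "s N = X * ?b^N + catalan_part ?b N" for N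
  let ?R = "mat n n (\<lambda>(i,k). bidiag_shift ?b i k)"
  let ?P = "mat n n (\<lambda>(i,k). ballot_bordered i k)"
  let ?J = "mat n n (\<lambda>(k,l). jacobi X ?b k l)"
  have rec: "s (Suc N) = ?b * s N + of_nat (ballot N 0)" for N
    by (simp add: s_def catalan_part_Suc algebra_simps)
  have congruent: "?R * mat n n (\<lambda>(i,j). s (i + j)) * transpose_mat ?R = ?P * ?J * transpose_mat ?P"
    unfolding hankel_congruence_bidiag_shift[where s = s and c = "\<lambda>N. of_nat (ballot N 0)", OF rec]
      jacobi_congruence_ballot_bordered
    by (simp add: s_def catalan_part_def)
  have "det (mat n n (\<lambda>(i,j). s (i + j)))
      = det (?R * mat n n (\<lambda>(i,j). s (i + j)) * transpose_mat ?R)"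
    by (rule det_congruence_unimodular[symmetric])
      (auto intro: det_unit_lower_triangular simp: bidiag_shift_def)
  also have "\<dots> = det ?J"
    unfolding congruent
    by (rule det_congruence_unimodular)
      (auto intro: det_unit_lower_triangular simp: ballot_bordered_def ballot_eq_0_if_less)
  also have "\<dots> = (-1)^(n-1) * (X * chebU (-a) (int n - 1) + chebU (-a) (int n - 2))"
    using det_jacobi_chebU[of "n - 1" X a] assms by (simp add: of_nat_diff)
  finally show ?thesis
    by (simp only: s_def sum_int_range_eq_catalan_part)
qed

end
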